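(* Let $\Omega$ be a finite nonempty set, let $T\ge 1$ be an integer, and let $g:\Omega^*\to\mathbb{R}$ be a sequence function. Let $O\in\operatorname{argmin}_{S\in\Omega^T} g(S)$ be an optimal sequence of length $T$. Assume that $g$ is postfix monotonically non-increasing and weakly supermodular with respect to $O$ with supermodularity ratio $\alpha(O)\ge 1$. Let $S^T$ be the greedy sequence of length $T$, defined by $S^0=\emptyset$ and $S^{t+1}=S^t\oplus(\omega_t)$ with $\omega_t\in\operatorname{argmin}_{\omega\in\Omega} g(S^t\oplus(\omega))$ for $t=0,\dots,T-1$. Setting $\phi_T(\alpha)=\left(1-\frac{1}{\alpha T}\right)^T$, we have $$g(S^T)\le \bigl(1-\phi_T(\alpha(O))\bigr)\,g(O)+\phi_T(\alpha(O))\,g(\emptyset).$$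
   Context: $\Omega^*$ denotes the set of all finite sequences (including the empty sequence $\emptyset$) with entries in $\Omega$, and $\Omega^n$ the sequences of length $n$. For $S=(S_1,\dots,S_n)$ and $S'=(S'_1,\dots,S'_m)$, the concatenation is $S\oplus S'=(S_1,\dots,S_n,S'_1,\dots,S'_m)$; for $\omega\in\Omega$, $S\oplus\omega$ means $S\oplus(\omega)$. A function $g:\Omega^*\to\mathbb{R}$ is prefix monotonically non-increasing if $g(S\oplus S')\le g(S)$ for all $S,S'\in\Omega^*$, and postfix monotonically non-increasing if $g(S'\oplus S)\le g(S)$ for all $S,S'\in\Omega^*$. A prefix monotonically non-increasing $g$ is weakly supermodular with respect to $S'\in\Omega^*$ with supermodularity ratio $\alpha(S')\ge 1$ if for every $S\in\Omega^*$, $$g(S)-g(S\oplus S')\le \alpha(S')\sum_{i=1}^{|S'|}\bigl(g(S)-g(S\oplus S'_i)\bigr).$$ *)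

theory Defs
  imports Complex_Main
begin

definition prefix_mono_nonincr :: "'a set \<Rightarrow> ('a list \<Rightarrow> real) \<Rightarrow> bool" where
  "prefix_mono_nonincr Om g \<longleftrightarrow>
     (\<forall>S\<in>lists Om. \<forall>S'\<in>lists Om. g (S @ S') \<le> g S)"

definition postfix_mono_nonincr :: "'a set \<Rightarrow> ('a list \<Rightarrow> real) \<Rightarrow> bool" where
  "postfix_mono_nonincr Om g \<longleftrightarrow>
     (\<forall>S\<in>lists Om. \<forall>S'\<in>lists Om. g (S' @ S) \<le> g S)"

definition weakly_supermodular ::
    "'a set \<Rightarrow> ('a list \<Rightarrow> real) \<Rightarrow> 'a list \<Rightarrow> real \<Rightarrow> bool" where
  "weakly_supermodular Om g O' \<alpha> \<longleftrightarrow>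
     prefix_mono_nonincr Om g \<and> \<alpha> \<ge> 1 \<and>
     (\<forall>S\<in>lists Om. g S - g (S @ O') \<le> \<alpha> * (\<Sum>i<length O'. g S - g (S @ [O' ! i])))"

definition is_greedy_seq :: "'a set \<Rightarrow> ('a list \<Rightarrow> real) \<Rightarrow> nat \<Rightarrow> 'a list \<Rightarrow> bool" where
  "is_greedy_seq Om g T S \<longleftrightarrow> length S = T \<and>
     (\<forall>t<T. S ! t \<in> Om \<and>
        (\<forall>\<omega>\<in>Om. g (take t S @ [S ! t]) \<le> g (take t S @ [\<omega>])))"

definition phi :: "nat \<Rightarrow> real \<Rightarrow> real" where
  "phi T \<alpha> = (1 - 1 / (\<alpha> * real T)) ^ T"

end

theory Submission
  imports Defs
begin

text \<open>Let \<open>k = |O|\<close>. By weak supermodularity the gap \<open>g R - g (R @ O)\<close> is at most \<open>\<alpha>\<close> times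
  the sum of the \<open>k\<close> single-step gains \<open>g R - g (R @ [O ! i])\<close>, each of which is at most the
  greedy gain; postfix monotonicity gives \<open>g (R @ O) \<le> g O\<close>. Hence one greedy step shrinks
  the excess \<open>g R - g O\<close> by the factor \<open>1 - 1 / (\<alpha> k)\<close>, and \<open>T\<close> steps starting from the
  empty sequence give the bound with \<open>phi T \<alpha>\<close>.\<close>

lemma weakly_supermodular_ge_one: "weakly_supermodular Om g O' \<alpha> \<Longrightarrow> \<alpha> \<ge> 1"
  unfolding weakly_supermodular_def by simp

lemma greedy_step_excess_bound:
  fixes g :: "'a list \<Rightarrow> real"
  assumes post: "postfix_mono_nonincr Om g"
    and super: "weakly_supermodular Om g O' \<alpha>"
    and O'_in: "O' \<in> lists Om" and O'_ne: "O' \<noteq> []"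
    and R_in: "R \<in> lists Om"
    and greedy: "\<forall>w\<in>Om. g (R @ [\<omega>]) \<le> g (R @ [w])"
  shows "g (R @ [\<omega>]) - g O' \<le> (1 - 1 / (\<alpha> * length O')) * (g R - g O')"
proof -
  define k where "k = \<alpha> * length O'"
  have "\<alpha> \<ge> 1" using super by (rule weakly_supermodular_ge_one)
  moreover have "real (length O') \<ge> 1" using O'_ne by (simp add: Suc_le_eq)
  ultimately have k_ge: "k \<ge> 1" unfolding k_def using mult_mono[of 1 \<alpha> 1] by force
  have "g R - g (R @ O') \<le> \<alpha> * (\<Sum>i<length O'. g R - g (R @ [O' ! i]))"
    using super R_in unfolding weakly_supermodular_def by blast
  also have "\<dots> \<le> \<alpha> * (\<Sum>i<length O'. g R - g (R @ [\<omega>]))"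
  proof (intro mult_left_mono sum_mono)
    fix i assume "i \<in> {..<length O'}"
    then have "O' ! i \<in> Om" using O'_in by (auto simp: nth_mem)
    then show "g R - g (R @ [O' ! i]) \<le> g R - g (R @ [\<omega>])" using greedy by auto
  qed (use \<open>\<alpha> \<ge> 1\<close> in simp)
  also have "\<dots> = k * (g R - g (R @ [\<omega>]))" by (simp add: k_def)
  finally have gap: "g R - g (R @ O') \<le> k * (g R - g (R @ [\<omega>]))" .
  have "g (R @ O') \<le> g O'" using post O'_in R_in unfolding postfix_mono_nonincr_def by blast
  with gap have "(g R - g O') / k \<le> g R - g (R @ [\<omega>])"
    using k_ge by (simp add: pos_divide_le_eq mult.commute)
  then show ?thesis unfolding k_def[symmetric] by (simp add: algebra_simps diff_divide_distrib)
qed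

lemma geometric_decay:
  fixes u :: "nat \<Rightarrow> real"
  assumes "c \<ge> 0" and "\<And>t. t < n \<Longrightarrow> u (Suc t) \<le> c * u t"
  shows "u n \<le> c ^ n * u 0"
  using assms(2)
proof (induction n)
  case 0
  then show ?case by simp
next
  case (Suc n)
  then have "u (Suc n) \<le> c * u n" by simp
  also have "\<dots> \<le> c * (c ^ n * u 0)" using Suc assms(1) by (intro mult_left_mono) auto
  finally show ?case by simp
qed

lemma greedy_seq_prefix_step:
  assumes "is_greedy_seq Om g T S" and "t < T"
  shows "take t S \<in> lists Om"
    and "take (Suc t) S = take t S @ [S ! t]"
    and "\<forall>w\<in>Om. g (take t S @ [S ! t]) \<le> g (take t S @ [w])"
proof -
  have "set S \<subseteq> Om" using assms(1) by (auto simp: is_greedy_seq_def in_set_conv_nth)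
  then show "take t S \<in> lists Om" using set_take_subset[of t S] by auto
  show "take (Suc t) S = take t S @ [S ! t]"
    using assms by (simp add: is_greedy_seq_def take_Suc_conv_app_nth)
  show "\<forall>w\<in>Om. g (take t S @ [S ! t]) \<le> g (take t S @ [w])"
    using assms by (simp add: is_greedy_seq_def)
qed

theorem theorem1:
  fixes Om :: "'a set" and T :: nat and g :: "'a list \<Rightarrow> real"
    and O' :: "'a list" and \<alpha> :: real and S :: "'a list"
  assumes "finite Om" and "Om \<noteq> {}" and "T \<ge> 1"
    and "O' \<in> lists Om" and "length O' = T"
    and "\<forall>S'\<in>lists Om. length S' = T \<longrightarrow> g O' \<le> g S'"
    and "postfix_mono_nonincr Om g"
    and "weakly_supermodular Om g O' \<alpha>"
    and "is_greedy_seq Om g T S"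
  shows "g S \<le> (1 - phi T \<alpha>) * g O' + phi T \<alpha> * g []"
proof -
  define c where "c = 1 - 1 / (\<alpha> * T)"
  have "\<alpha> * T \<ge> 1"
    using weakly_supermodular_ge_one[OF assms(8)] assms(3) mult_mono[of 1 \<alpha> 1 "real T"] by force
  then have "c \<ge> 0" unfolding c_def by (simp add: field_simps)
  have "O' \<noteq> []" using assms(3,5) by auto
  have "g (take (Suc t) S) - g O' \<le> c * (g (take t S) - g O')" if "t < T" for t
    using greedy_step_excess_bound[OF assms(7,8,4) \<open>O' \<noteq> []\<close>]
      greedy_seq_prefix_step[OF assms(9) that] assms(5)
    unfolding c_def by metis
  from geometric_decay[where u = "\<lambda>t. g (take t S) - g O'", OF \<open>c \<ge> 0\<close> this]
  have "g (take T S) - g O' \<le> c ^ T * (g [] - g O')" by simp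
  moreover have "take T S = S" using assms(9) by (simp add: is_greedy_seq_def)
  ultimately show ?thesis unfolding phi_def c_def[symmetric] by (simp add: algebra_simps)
qed

end
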